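(* For all $b,b'\in\mathbb F_{3^{2m}}$, the vector $(\mathrm{Tr}_{2m}(bt)\,\mathrm{Tr}_{2m}(b't))_{t\in\mathbb F_{3^{2m}}}$ belongs to $\mathcal C_3(\mathbb D_d)$.
   Context: Let $m\ge 2$ be an integer. For $s\in\{m,2m\}$ let $\mathrm{Tr}_s:\mathbb F_{3^s}\to\mathbb F_3$ denote the absolute trace. Vectors in $\mathbb F_3^{3^{2m}}$ are indexed by $\mathbb F_{3^{2m}}$, and a function $f:\mathbb F_{3^{2m}}\to\mathbb F_3$ is identified with $(f(t))_{t\in\mathbb F_{3^{2m}}}$. Let $\mathcal C(2m,3)=\{(\mathrm{Tr}_{2m}(at^{3^m+1}+bt)+h)_{t\in\mathbb F_{3^{2m}}}: a\in\mathbb F_{3^m}, b\in\mathbb F_{3^{2m}}, h\in\mathbb F_3\}$, let $d$ be its minimum nonzero Hamming weight, let $\mathbb D_d$ be the incidence structure on $\mathbb F_{3^{2m}}$ whose blocks are the supports of the weight-$d$ codewords, and let $\mathcal C_3(\mathbb D_d)$ be the $\mathbb F_3$-span of the incidence vectors of the blocks (entry $1$ on the block, $0$ elsewhere). *)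

theory Defs
  imports Main
begin

text \<open>The ambient field F_{3^{2m}} is a type 'a of class field/finite with
CARD('a) = 3^(2m). Vectors in F_3^{3^{2m}} are functions 'a \<Rightarrow> 'a with values in F_3.\<close>

definition F3 :: "'a::field set" where
  "F3 = {x. x ^ 3 = x}"

definition subfield_m :: "nat \<Rightarrow> 'a::field set" where
  "subfield_m m = {x. x ^ (3 ^ m) = x}"

definition tr :: "nat \<Rightarrow> 'a::field \<Rightarrow> 'a" where
  "tr s x = (\<Sum>i<s. x ^ (3 ^ i))"

definition code_C :: "nat \<Rightarrow> ('a::field \<Rightarrow> 'a) set" where
  "code_C m = {(\<lambda>t. tr (2*m) (a * t ^ (3 ^ m + 1) + b * t) + h) | a b h.
                 a \<in> subfield_m m \<and> h \<in> F3}"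

definition hweight :: "('a::finite \<Rightarrow> 'b::zero) \<Rightarrow> nat" where
  "hweight c = card {t. c t \<noteq> 0}"

definition code_d :: "('a::{field,finite} \<Rightarrow> 'a) set \<Rightarrow> nat" where
  "code_d C = Min {hweight c | c. c \<in> C \<and> c \<noteq> (\<lambda>_. 0)}"

definition blocks_D :: "nat \<Rightarrow> 'a::{field,finite} set set" where
  "blocks_D m = (\<lambda>c :: 'a \<Rightarrow> 'a. {t. c t \<noteq> 0}) ` {c. c \<in> code_C m \<and> hweight c = code_d (code_C m :: ('a \<Rightarrow> 'a) set)}"

definition code_of_design :: "'a::{field,finite} set set \<Rightarrow> ('a \<Rightarrow> 'a) set" where
  "code_of_design Bs = {(\<lambda>t. \<Sum>B\<in>Bs. lam B * (if t \<in> B then 1 else 0)) | lam.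
                          \<forall>B. lam B \<in> F3}"

end

theory Submission
  imports Defs "HOL-Computational_Algebra.Polynomial"
begin

(* Over F_3 the square of a codeword is the incidence vector of its support, so the span
   C_3(D_d) contains c^2 for every minimum-weight codeword c; the substitutions t -> l t + s
   (l nonzero) preserve C(2m,3) and Hamming weights, hence permute the minimum-weight words.
   Since Tr(bt) Tr(b't) = Tr((b+b')t)^2 - Tr((b-b')t)^2 in characteristic 3, it suffices to
   reach every Tr(ct)^2.  A minimum-weight word normalises either to Tr(bt) + h with b nonzero,
   whose affine images include every Tr(ct), or to Q(t) + e with Q(t) = Tr(a t^(q+1)), q = 3^m,
   a nonzero, and e nonzero (otherwise Q - 1 or Q + 1 would be lighter, by counting the zeros of
   Q through the norm map).  Composing with t -> l t, where l^(q+1) = -1, also gives (Q - e)^2;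
   from the squares (Q(t+s) + e)^2 and (Q(t+s) - e)^2 one obtains Q(t+s), the constants,
   Q(t+s)^2 and finally Tr(ct)^2, using Q(t + s) = Q(t) + Tr(2 a s^q t) + Q(s). *)

section \<open>Finite fields\<close>

lemma of_nat_card_UNIV_eq_0: "of_nat (card (UNIV :: 'a set)) = (0 :: 'a :: {ring_1, finite})"
proof -
  have "(\<Sum>y\<in>(UNIV :: 'a set). y) = (\<Sum>y\<in>UNIV. 1 + y)"
    by (rule sum.reindex_bij_witness[of _ "\<lambda>y. 1 + y" "\<lambda>y. y - 1"]) auto
  then show ?thesis
    by (simp add: sum.distrib)
qed

lemma power_card_UNIV: "x ^ card (UNIV :: 'a set) = (x :: 'a :: {field, finite})"
proof (cases "x = 0")
  case False
  let ?U = "UNIV - {0 :: 'a}"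
  have "(\<Prod>y\<in>?U. y) = (\<Prod>y\<in>?U. x * y)"
    by (rule prod.reindex_bij_witness[of _ "\<lambda>y. x * y" "\<lambda>y. y / x"]) (use False in auto)
  also have "\<dots> = x ^ card ?U * (\<Prod>y\<in>?U. y)"
    by (simp add: prod.distrib)
  finally have "x ^ card ?U = 1"
    by simp
  moreover have "card (UNIV :: 'a set) = Suc (card ?U)"
    by (simp add: card_Diff_singleton card_gt_0_iff)
  ultimately show ?thesis
    by (metis mult.right_neutral power_Suc)
qed (simp add: card_gt_0_iff)

lemma card_power_eq_poly_le:
  fixes p :: "'a :: idom poly"
  assumes "degree p < n"
  shows "card {x. x ^ n = poly p x} \<le> n"
proof -
  have deg: "degree (monom 1 n - p) = n"
    using assms degree_add_eq_left[of "- p" "monom 1 n"] by (simp add: degree_monom_eq)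
  then have "monom 1 n - p \<noteq> 0"
    using assms by auto
  from card_poly_roots_bound[OF this] deg show ?thesis
    by (simp add: poly_monom)
qed

lemma card_power_eq_le: "n \<ge> 1 \<Longrightarrow> card {x :: 'a :: idom. x ^ n = y} \<le> n"
  using card_power_eq_poly_le[of "[:y:]" n] by simp

lemma card_power_eq_self_le: "n \<ge> 2 \<Longrightarrow> card {x :: 'a :: idom. x ^ n = x} \<le> n"
  using card_power_eq_poly_le[of "[:0, 1:]" n] by simp

lemma exists_sum_power_pow_neq_0:
  assumes "n \<ge> 1" and "k \<ge> 2" and "card (UNIV :: 'a :: {idom, finite} set) = k ^ n"
  shows "\<exists>x :: 'a. (\<Sum>i<n. x ^ k ^ i) \<noteq> 0"
proof -
  define p :: "'a poly" where "p = (\<Sum>i<n. monom 1 (k ^ i))"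
  have "coeff p 1 = (\<Sum>i<n. if i = 0 then 1 else 0)"
    unfolding p_def coeff_sum coeff_monom
    by (intro sum.cong) (use \<open>k \<ge> 2\<close> in \<open>auto simp: power_eq_1_iff\<close>)
  then have "p \<noteq> 0"
    using \<open>n \<ge> 1\<close> by auto
  have "degree p < k ^ n"
    unfolding p_def using \<open>k \<ge> 2\<close>
    by (intro degree_sum_less) (auto intro: le_less_trans[OF degree_monom_le] power_strict_increasing)
  with card_poly_roots_bound[OF \<open>p \<noteq> 0\<close>] assms(3) have "{x. poly p x = 0} \<noteq> UNIV"
    by auto
  then show ?thesis
    by (auto simp: p_def poly_sum poly_monom)
qed

lemma hweight_comp_bij:
  assumes "bij \<sigma>"
  shows "hweight (\<lambda>t. g (\<sigma> t)) = hweight g"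
proof -
  have "hweight (\<lambda>t. g (\<sigma> t)) = card (\<sigma> -` {u. g u \<noteq> 0})"
    unfolding hweight_def by (rule arg_cong[where f = card]) auto
  also have "\<dots> = hweight g"
    unfolding hweight_def
    by (rule card_vimage_inj[OF bij_is_inj[OF assms]]) (use bij_is_surj[OF assms] in simp)
  finally show ?thesis .
qed

lemma hweight_eq_card_diff_zeros:
  fixes f :: "'a :: finite \<Rightarrow> 'b :: zero"
  shows "hweight f = card (UNIV :: 'a set) - card {t. f t = 0}"
proof -
  have "{t. f t \<noteq> 0} = UNIV - {t. f t = 0}"
    by auto
  then show ?thesis
    unfolding hweight_def by (simp add: card_Diff_subset)
qed

lemma bij_affine: "l \<noteq> 0 \<Longrightarrow> bij (\<lambda>t :: 'a :: field. l * t + s)"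
  unfolding bij_def inj_def surj_def by (auto intro!: exI[of _ "(_ - s) / l"])

section \<open>Characteristic 3 and the code of a design\<close>

locale finite_field_char3 =
  fixes ty :: "'a :: {field, finite} itself"
  assumes three_eq_0: "(3 :: 'a) = 0"
begin

lemma two_eq_minus_one: "(2 :: 'a) = -1"
  using three_eq_0 by (simp add: eq_neg_iff_add_eq_0)

lemma four_eq_one: "(4 :: 'a) = 1"
proof -
  have "(4 :: 'a) = 3 + 1"
    by simp
  with three_eq_0 show ?thesis
    by simp
qed

lemma two_neq_0: "(2 :: 'a) \<noteq> 0"
proof
  assume "(2 :: 'a) = 0"
  moreover have "(3 :: 'a) = 2 + 1"
    by simp
  ultimately show False
    using three_eq_0 by simp
qed

lemma one_neq_minus_one: "(1 :: 'a) \<noteq> -1"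
  using two_neq_0 by (metis eq_neg_iff_add_eq_0 one_add_one)

lemma power_3_add: "(x + y) ^ 3 = x ^ 3 + (y :: 'a) ^ 3"
proof -
  have "(x + y) ^ 3 = x ^ 3 + y ^ 3 + 3 * (x\<^sup>2 * y + x * y\<^sup>2)"
    by (simp add: power3_eq_cube power2_eq_square algebra_simps)
  then show ?thesis
    by (simp add: three_eq_0)
qed

lemma power_3_pow_add: "(x + y) ^ 3 ^ k = x ^ 3 ^ k + (y :: 'a) ^ 3 ^ k"
proof (induction k arbitrary: x y)
  case (Suc k)
  then show ?case
    by (simp add: power_mult power_3_add)
qed simp

lemma power_3_pow_diff: "(x - y) ^ 3 ^ k = x ^ 3 ^ k - (y :: 'a) ^ 3 ^ k"
  using power_3_pow_add[of x "- y" k] by simp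

lemma sum_power_3: "(\<Sum>i\<in>I. f i) ^ 3 = (\<Sum>i\<in>I. (f i :: 'a) ^ 3)"
  by (induction I rule: infinite_finite_induct) (simp_all add: power_3_add)

lemma F3_iff: "x \<in> F3 \<longleftrightarrow> x = 0 \<or> x = 1 \<or> x = (-1 :: 'a)"
proof -
  have "x ^ 3 - x = x * (x - 1) * (x + 1)"
    by (simp add: power3_eq_cube algebra_simps)
  then show ?thesis
    unfolding F3_def by (auto simp: power3_eq_cube eq_neg_iff_add_eq_0)
qed

lemma F3_add: "x \<in> F3 \<Longrightarrow> y \<in> F3 \<Longrightarrow> x + (y :: 'a) \<in> F3"
  using two_eq_minus_one by (auto simp: F3_iff)

lemma F3_minus: "x \<in> F3 \<Longrightarrow> - (x :: 'a) \<in> F3"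
  by (auto simp: F3_iff)

lemma F3_mult: "x \<in> F3 \<Longrightarrow> y \<in> F3 \<Longrightarrow> x * (y :: 'a) \<in> F3"
  by (auto simp: F3_iff)

lemma F3_0: "(0 :: 'a) \<in> F3" and F3_1: "(1 :: 'a) \<in> F3" and F3_minus_1: "(-1 :: 'a) \<in> F3"
  by (auto simp: F3_iff)

lemma F3_square: "x \<in> F3 \<Longrightarrow> (x :: 'a)\<^sup>2 = (if x = 0 then 0 else 1)"
  by (auto simp: F3_iff)

lemma F3_power_3_pow: "x \<in> F3 \<Longrightarrow> (x :: 'a) ^ 3 ^ k = x"
  by (auto simp: F3_iff)

lemma subfield_m_add: "x \<in> subfield_m n \<Longrightarrow> y \<in> subfield_m n \<Longrightarrow> x + (y :: 'a) \<in> subfield_m n"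
  by (simp add: subfield_m_def power_3_pow_add)

lemma subfield_m_minus: "x \<in> subfield_m n \<Longrightarrow> - (x :: 'a) \<in> subfield_m n"
  by (simp add: subfield_m_def)

lemma subfield_m_diff: "x \<in> subfield_m n \<Longrightarrow> y \<in> subfield_m n \<Longrightarrow> x - (y :: 'a) \<in> subfield_m n"
  by (simp add: subfield_m_def power_3_pow_diff)

lemma subfield_m_mult: "x \<in> subfield_m n \<Longrightarrow> y \<in> subfield_m n \<Longrightarrow> x * (y :: 'a) \<in> subfield_m n"
  by (simp add: subfield_m_def power_mult_distrib)

lemma subfield_m_divide: "x \<in> subfield_m n \<Longrightarrow> y \<in> subfield_m n \<Longrightarrow> x / (y :: 'a) \<in> subfield_m n"
  by (simp add: subfield_m_def power_divide)

lemma F3_subset_subfield_m: "F3 \<subseteq> (subfield_m n :: 'a set)"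
  by (auto simp: subfield_m_def F3_power_3_pow)

lemma code_of_design_add:
  fixes Bs :: "'a set set"
  assumes "f \<in> code_of_design Bs" and "g \<in> code_of_design Bs"
  shows "(\<lambda>t. f t + g t) \<in> code_of_design Bs"
proof -
  obtain lam mu where "\<forall>B. lam B \<in> F3" "\<forall>B. mu B \<in> F3"
    and "f = (\<lambda>t. \<Sum>B\<in>Bs. lam B * (if t \<in> B then 1 else 0))"
    and "g = (\<lambda>t. \<Sum>B\<in>Bs. mu B * (if t \<in> B then 1 else 0))"
    using assms unfolding code_of_design_def by blast
  then show ?thesis
    unfolding code_of_design_def
    by (auto simp: F3_add sum.distrib distrib_right intro!: exI[of _ "\<lambda>B. lam B + mu B"])
qed

lemma code_of_design_smult:
  fixes Bs :: "'a set set"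
  assumes "c \<in> F3" and "f \<in> code_of_design Bs"
  shows "(\<lambda>t. c * f t) \<in> code_of_design Bs"
proof -
  obtain lam where "\<forall>B. lam B \<in> F3" and "f = (\<lambda>t. \<Sum>B\<in>Bs. lam B * (if t \<in> B then 1 else 0))"
    using assms unfolding code_of_design_def by blast
  with assms(1) show ?thesis
    unfolding code_of_design_def
    by (auto simp: F3_mult sum_distrib_left mult.assoc intro!: exI[of _ "\<lambda>B. c * lam B"])
qed

lemma code_of_design_diff:
  fixes Bs :: "'a set set"
  assumes "f \<in> code_of_design Bs" and "g \<in> code_of_design Bs"
  shows "(\<lambda>t. f t - g t) \<in> code_of_design Bs"
  using code_of_design_add[OF assms(1) code_of_design_smult[OF F3_minus_1 assms(2)]] by simp

lemma code_of_design_indicator: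
  fixes Bs :: "'a set set"
  assumes "B \<in> Bs"
  shows "(\<lambda>t. if t \<in> B then 1 else 0) \<in> code_of_design Bs"
proof -
  have "(\<lambda>t. if t \<in> B then 1 else 0) =
        (\<lambda>t. \<Sum>B'\<in>Bs. (if B' = B then 1 else 0) * (if t \<in> B' then 1 else (0 :: 'a)))"
    using assms by (simp add: if_distrib[of "\<lambda>x. x * _"] cong: if_cong)
  then show ?thesis
    unfolding code_of_design_def by (auto simp: F3_0 F3_1 intro!: exI[of _ "\<lambda>B'. if B' = B then 1 else 0"])
qed

lemma code_of_design_zero: "(\<lambda>_. 0) \<in> code_of_design (Bs :: 'a set set)"
  unfolding code_of_design_def by (auto simp: F3_0 intro!: exI[of _ "\<lambda>_. 0"])

lemma code_of_design_const:
  fixes Bs :: "'a set set"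
  assumes "(\<lambda>_. 1) \<in> code_of_design Bs" and "c \<in> F3"
  shows "(\<lambda>_. c) \<in> code_of_design Bs"
  using code_of_design_smult[OF assms(2,1)] by simp

lemma code_of_design_of_shifted_squares:
  fixes Bs :: "'a set set"
  assumes "(\<lambda>t. (f t + e)\<^sup>2) \<in> code_of_design Bs" and "(\<lambda>t. (f t - e)\<^sup>2) \<in> code_of_design Bs"
    and "e \<in> F3" and "e \<noteq> 0"
  shows "f \<in> code_of_design Bs"
proof -
  have "(\<lambda>t. e * ((f t + e)\<^sup>2 - (f t - e)\<^sup>2)) \<in> code_of_design Bs"
    using assms by (intro code_of_design_smult code_of_design_diff)
  moreover have "e * ((x + e)\<^sup>2 - (x - e)\<^sup>2) = x" for x
  proof -
    have "e * ((x + e)\<^sup>2 - (x - e)\<^sup>2) = 4 * e\<^sup>2 * x"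
      by (simp add: power2_eq_square algebra_simps)
    with assms(3,4) show ?thesis
      by (simp add: four_eq_one F3_square)
  qed
  ultimately show ?thesis
    by simp
qed

lemma code_of_design_square_of_shifted_square:
  fixes Bs :: "'a set set"
  assumes "(\<lambda>t. (f t + e)\<^sup>2) \<in> code_of_design Bs" and "f \<in> code_of_design Bs"
    and "(\<lambda>_. 1) \<in> code_of_design Bs" and "e \<in> F3"
  shows "(\<lambda>t. (f t)\<^sup>2) \<in> code_of_design Bs"
proof -
  have "(\<lambda>_. e\<^sup>2) \<in> code_of_design Bs"
    using assms(3) F3_mult[OF assms(4,4)] by (simp add: code_of_design_const power2_eq_square)
  with assms have "(\<lambda>t. (f t + e)\<^sup>2 + e * f t - e\<^sup>2) \<in> code_of_design Bs"
    by (intro code_of_design_add code_of_design_diff code_of_design_smult)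
  moreover have "(x + e)\<^sup>2 + e * x - e\<^sup>2 = x\<^sup>2" for x
  proof -
    have "(x + e)\<^sup>2 + e * x - e\<^sup>2 = x\<^sup>2 + 3 * (e * x)"
      by (simp add: power2_eq_square algebra_simps)
    then show ?thesis
      by (simp add: three_eq_0)
  qed
  ultimately show ?thesis
    by simp
qed

end

section \<open>Trace, norm and the quadratic form\<close>

locale gf_3_2m =
  fixes m :: nat and ty :: "'a :: {field, finite} itself"
  assumes m_pos: "m \<ge> 1" and card_UNIV: "card (UNIV :: 'a set) = 3 ^ (2 * m)"
begin

abbreviation q :: nat where "q \<equiv> 3 ^ m"

abbreviation TR :: "'a \<Rightarrow> 'a" where "TR \<equiv> tr (2 * m)"

sublocale finite_field_char3 ty
proof
  have "(3 :: 'a) ^ (2 * m) = 0"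
    using of_nat_card_UNIV_eq_0[where 'a = 'a] by (simp add: card_UNIV)
  then show "(3 :: 'a) = 0"
    by simp
qed

lemma power_q_q: "(x ^ q) ^ q = (x :: 'a)"
  using power_card_UNIV[of x] by (simp add: card_UNIV power_mult_distrib flip: power_mult power_add mult_2)

lemma q_ge_3: "q \<ge> 3"
  using m_pos power_increasing[of 1 m "3 :: nat"] by simp

lemma tr_add: "TR (x + y) = TR x + TR y"
  by (simp add: tr_def power_3_pow_add sum.distrib)

lemma tr_minus: "TR (- x) = - TR x"
  by (simp add: tr_def sum_negf)

lemma tr_diff: "TR (x - y) = TR x - TR y"
  using tr_add[of x "- y"] by (simp add: tr_minus)

lemma tr_0: "TR 0 = 0"
  by (simp add: tr_def zero_power)

lemma tr_power_3: "TR (x ^ 3) = TR x"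
proof -
  have "TR (x ^ 3) + x ^ 3 ^ 0 = (\<Sum>i<Suc (2 * m). x ^ 3 ^ i)"
    unfolding tr_def sum.lessThan_Suc_shift by (simp flip: power_mult)
  also have "\<dots> = TR x + x ^ 3 ^ (2 * m)"
    by (simp add: tr_def)
  finally show ?thesis
    using power_card_UNIV[of x] by (simp add: card_UNIV)
qed

lemma tr_power_3_pow: "TR (x ^ 3 ^ k) = TR x"
  by (induction k arbitrary: x) (simp_all add: power_mult tr_power_3)

lemma tr_in_F3: "TR x \<in> F3"
proof -
  have "(TR x) ^ 3 = TR (x ^ 3)"
    unfolding tr_def sum_power_3 by (simp add: ac_simps flip: power_mult)
  then show ?thesis
    by (simp add: F3_def tr_power_3)
qed

lemma tr_smult: "c \<in> F3 \<Longrightarrow> TR (c * x) = c * TR x"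
  by (simp add: tr_def power_mult_distrib F3_power_3_pow sum_distrib_left)

lemma exists_tr_eq_1: "\<exists>x. TR x = 1"
proof -
  obtain x where "TR x \<noteq> 0"
    using exists_sum_power_pow_neq_0[of "2 * m" 3] m_pos card_UNIV by (auto simp: tr_def)
  with tr_in_F3[of x] have "TR (TR x * x) = 1"
    by (simp add: tr_smult F3_square flip: power2_eq_square)
  then show ?thesis ..
qed

lemma norm_in_subfield: "(t :: 'a) ^ (q + 1) \<in> subfield_m m"
proof -
  have "(t ^ (q + 1)) ^ q = (t ^ q) ^ q * t ^ q"
    by (simp add: power_mult_distrib)
  also have "\<dots> = t ^ (q + 1)"
    by (simp add: power_q_q)
  finally show ?thesis
    by (simp add: subfield_m_def)
qed

lemma card_UNIV_eq_q_q: "card (UNIV :: 'a set) = q * q"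
  by (simp add: card_UNIV mult_2 power_add)

lemma card_subfield_le: "card (subfield_m m :: 'a set) \<le> q"
  using card_power_eq_self_le[of q, where 'a = 'a] q_ge_3 by (simp add: subfield_m_def)

lemma norm_surj:
  assumes "y \<in> subfield_m m" and "y \<noteq> 0"
  shows "\<exists>t :: 'a. t ^ (q + 1) = y"
proof -
  let ?N = "\<lambda>t :: 'a. t ^ (q + 1)"
  let ?Im = "?N ` (UNIV - {0})"
  let ?F = "subfield_m m - {0 :: 'a}"
  have Im_sub: "?Im \<subseteq> ?F"
    using norm_in_subfield by auto
  have "(q - 1) * (q + 1) = card (UNIV - {0 :: 'a})"
    using q_ge_3 by (simp add: card_UNIV_eq_q_q card_Diff_singleton algebra_simps)
  also have "\<dots> \<le> card (\<Union>y\<in>?Im. {t. ?N t = y})"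
    by (rule card_mono) auto
  also have "\<dots> \<le> (\<Sum>y\<in>?Im. card {t. ?N t = y})"
    by (rule card_UN_le) simp
  also have "\<dots> \<le> card ?Im * (q + 1)"
    using sum_bounded_above[of ?Im "\<lambda>y. card {t. ?N t = y}" "q + 1"] card_power_eq_le[of "q + 1", where 'a = 'a]
    by simp
  finally have "q - 1 \<le> card ?Im"
    by (simp only: mult_le_cancel2)
  moreover have "card ?F \<le> q - 1"
    using card_subfield_le by (simp add: card_Diff_singleton subfield_m_def zero_power)
  ultimately have "?Im = ?F"
    by (intro card_seteq Im_sub) simp_all
  with assms have "y \<in> ?Im"
    by blast
  then show ?thesis
    by blast
qed

lemma card_tr_eq_0_subfield:
  assumes "a \<in> subfield_m m" and "a \<noteq> 0"
  shows "3 * card {y \<in> subfield_m m. TR (a * y) = 0} \<le> q"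
proof -
  let ?L = "\<lambda>c. {y \<in> subfield_m m. TR (a * y) = c}"
  obtain x where x: "TR x = 1"
    using exists_tr_eq_1 ..
  define y1 where "y1 = - (x + x ^ q) / a"
  have "x + x ^ q \<in> subfield_m m"
    by (simp add: subfield_m_def power_3_pow_add power_q_q)
  with assms(1) have y1: "y1 \<in> subfield_m m"
    unfolding y1_def by (intro subfield_m_divide subfield_m_minus)
  have "a * y1 = - (x + x ^ q)"
    using assms(2) by (simp add: y1_def)
  then have "TR (a * y1) = - (TR x + TR (x ^ q))"
    by (simp only: tr_minus tr_add)
  then have tr_y1: "TR (a * y1) = 1"
    by (simp add: x tr_power_3_pow two_eq_minus_one)
  let ?A1 = "(\<lambda>y. y + y1) ` ?L 0" and ?A2 = "(\<lambda>y. y - y1) ` ?L 0"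
  have L1: "?A1 \<subseteq> ?L 1" and L2: "?A2 \<subseteq> ?L (-1)"
    using y1 tr_y1 by (auto simp: distrib_left right_diff_distrib tr_add tr_diff subfield_m_add
        subfield_m_diff)
  have "?L 0 \<inter> ?A1 \<subseteq> ?L 0 \<inter> ?L 1"
    using L1 by (rule Int_mono[OF order_refl])
  moreover have "?L 0 \<inter> ?L 1 = {}"
    by auto
  ultimately have disj1: "?L 0 \<inter> ?A1 = {}"
    by (simp only: subset_empty)
  have "(?L 0 \<union> ?A1) \<inter> ?A2 \<subseteq> (?L 0 \<union> ?L 1) \<inter> ?L (-1)"
    using L1 L2 by (intro Int_mono Un_mono order_refl)
  moreover have "(?L 0 \<union> ?L 1) \<inter> ?L (-1) = {}"
    using one_neq_minus_one by auto
  ultimately have disj2: "(?L 0 \<union> ?A1) \<inter> ?A2 = {}"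
    by (simp only: subset_empty)
  have "3 * card (?L 0) = card (?L 0) + card ?A1 + card ?A2"
    by (simp add: card_image)
  also have "\<dots> = card (?L 0 \<union> ?A1 \<union> ?A2)"
    using disj1 disj2 by (simp add: card_Un_disjoint)
  also have "\<dots> \<le> card (subfield_m m :: 'a set)"
    using L1 L2 by (intro card_mono) auto
  finally show ?thesis
    using card_subfield_le by linarith
qed

definition hform :: "'a \<Rightarrow> 'a \<Rightarrow> 'a" where
  "hform a t = TR (a * t ^ (q + 1))"

lemma tr_norm_affine:
  assumes "a \<in> subfield_m m"
  shows "TR (a * (l * t + s) ^ (q + 1)) =
         TR (a * l ^ (q + 1) * t ^ (q + 1)) + TR (2 * a * l * s ^ q * t) + TR (a * s ^ (q + 1))"
proof -
  have "a ^ q = a"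
    using assms by (simp add: subfield_m_def)
  \<comment> \<open>the two cross terms are Frobenius conjugates, so they have the same trace\<close>
  then have conj: "(a * l ^ q * s * t ^ q) ^ q = a * l * s ^ q * t"
    by (simp add: power_mult_distrib power_q_q)
  have "(l * t + s) ^ (q + 1) = (l ^ q * t ^ q + s ^ q) * (l * t + s)"
    by (simp add: power_3_pow_add power_mult_distrib)
  then have "a * (l * t + s) ^ (q + 1) =
             a * l ^ (q + 1) * t ^ (q + 1) + a * l ^ q * s * t ^ q + a * l * s ^ q * t + a * s ^ (q + 1)"
    by (simp add: algebra_simps)
  then have "TR (a * (l * t + s) ^ (q + 1)) =
             TR (a * l ^ (q + 1) * t ^ (q + 1)) + (TR (a * l * s ^ q * t) + TR (a * l * s ^ q * t)) +
             TR (a * s ^ (q + 1))"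
    using tr_power_3_pow[of "a * l ^ q * s * t ^ q" m] by (simp add: tr_add conj)
  also have "TR (a * l * s ^ q * t) + TR (a * l * s ^ q * t) = TR (2 * a * l * s ^ q * t)"
  proof -
    have "2 * a * l * s ^ q * t = a * l * s ^ q * t + a * l * s ^ q * t"
      by algebra
    then show ?thesis
      by (simp only: tr_add)
  qed
  finally show ?thesis .
qed

lemma hform_add:
  assumes "a \<in> subfield_m m"
  shows "hform a (t + s) = hform a t + TR (2 * a * s ^ q * t) + hform a s"
  using tr_norm_affine[OF assms, of 1 t s] by (simp add: hform_def)

lemma hform_minus: "hform a (- s) = hform a s"
  by (simp add: hform_def)

lemma hform_diff:
  assumes "a \<in> subfield_m m"
  shows "hform a (t - s) = hform a t - TR (2 * a * s ^ q * t) + hform a s"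
  using hform_add[OF assms, of t "- s"] by (simp add: hform_minus tr_minus)

lemma hform_in_F3: "hform a t \<in> F3"
  by (simp add: hform_def tr_in_F3)

lemma card_hform_eq_0_le:
  "card {t. hform a t = 0} \<le> Suc ((card {y \<in> subfield_m m. TR (a * y) = 0} - 1) * (q + 1))"
proof -
  let ?K = "{y \<in> subfield_m m. TR (a * y) = 0}"
  let ?Z = "\<Union>y\<in>?K - {0}. {t :: 'a. t ^ (q + 1) = y}"
  have "0 \<in> ?K"
    by (simp add: tr_0 subfield_m_def zero_power)
  have "{t. hform a t = 0} \<subseteq> insert 0 ?Z"
    using norm_in_subfield by (auto simp: hform_def)
  then have "card {t. hform a t = 0} \<le> card (insert 0 ?Z)"
    by (intro card_mono) simp_all
  also have "\<dots> \<le> Suc (card ?Z)"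
    by (simp add: card_insert_if)
  also have "card ?Z \<le> (\<Sum>y\<in>?K - {0}. card {t :: 'a. t ^ (q + 1) = y})"
    by (rule card_UN_le) simp
  also have "\<dots> \<le> (card ?K - 1) * (q + 1)"
    using sum_bounded_above[of "?K - {0}" "\<lambda>y. card {t :: 'a. t ^ (q + 1) = y}" "q + 1"]
      card_power_eq_le[of "q + 1", where 'a = 'a] \<open>0 \<in> ?K\<close>
    by (simp add: card_Diff_singleton)
  finally show ?thesis
    by simp
qed

lemma card_hform_eq_0:
  assumes "a \<in> subfield_m m" and "a \<noteq> 0"
  shows "3 * card {t. hform a t = 0} < q * q"
proof -
  define k where "k = card {y \<in> subfield_m m. TR (a * y) = 0}"
  have "0 \<in> {y \<in> subfield_m m. TR (a * y) = 0}"
    by (simp add: tr_0 subfield_m_def zero_power)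
  then have "k \<ge> 1"
    by (auto simp: k_def card_gt_0_iff Suc_le_eq)
  with card_tr_eq_0_subfield[OF assms] have "3 * (k - 1) \<le> q - 3"
    unfolding k_def by linarith
  then have "3 * (k - 1) * (q + 1) \<le> (q - 3) * (q + 1)"
    by (rule mult_right_mono) simp
  with card_hform_eq_0_le[of a] have "3 * card {t. hform a t = 0} \<le> 3 + (q - 3) * (q + 1)"
    unfolding k_def by linarith
  also have "\<dots> < q * q"
  proof -
    obtain p where "q = p + 3"
      using q_ge_3 by (metis add.commute le_iff_add)
    then show ?thesis
      by (simp add: algebra_simps)
  qed
  finally show ?thesis .
qed

lemma hform_level_gt_zero_level:
  assumes "a \<in> subfield_m m" and "a \<noteq> 0"
  shows "\<exists>e. (e = 1 \<or> e = -1) \<and> card {t. hform a t = 0} < card {t. hform a t = e}"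
proof (rule ccontr)
  let ?L = "\<lambda>c. {t. hform a t = c}"
  assume "\<not> ?thesis"
  then have "card (?L 1) \<le> card (?L 0)" and "card (?L (-1)) \<le> card (?L 0)"
    by (auto simp: not_less)
  moreover have "q * q = card (?L 0) + card (?L 1) + card (?L (-1))"
  proof -
    have "UNIV = ?L 0 \<union> ?L 1 \<union> ?L (-1)"
      using tr_in_F3 by (auto simp: hform_def F3_iff)
    then have "q * q = card (?L 0 \<union> ?L 1 \<union> ?L (-1))"
      using card_UNIV_eq_q_q by simp
    also have "\<dots> = card (?L 0) + card (?L 1) + card (?L (-1))"
      using one_neq_minus_one by (subst card_Un_disjoint; auto)+
    finally show ?thesis .
  qed
  ultimately show False
    using card_hform_eq_0[OF assms] by linarith
qed

section \<open>Minimum-weight codewords\<close>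

abbreviation Cm :: "('a \<Rightarrow> 'a) set" where
  "Cm \<equiv> code_C m"

lemma code_C_memI: "a \<in> subfield_m m \<Longrightarrow> h \<in> F3 \<Longrightarrow> (\<lambda>t. TR (a * t ^ (q + 1) + b * t) + h) \<in> Cm"
  unfolding code_C_def by blast

lemma code_C_memE:
  assumes "c \<in> Cm"
  obtains a b h where "c = (\<lambda>t. TR (a * t ^ (q + 1) + b * t) + h)" and "a \<in> subfield_m m" and "h \<in> F3"
  using assms unfolding code_C_def by blast

lemma code_C_in_F3: "c \<in> Cm \<Longrightarrow> c t \<in> F3"
  by (elim code_C_memE) (simp add: tr_in_F3 F3_add)

lemma code_C_affine:
  assumes "c \<in> Cm"
  shows "(\<lambda>t. c (l * t + s)) \<in> Cm"
proof -
  obtain a b h where c: "c = (\<lambda>t. TR (a * t ^ (q + 1) + b * t) + h)" and a: "a \<in> subfield_m m" and "h \<in> F3"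
    using assms by (rule code_C_memE)
  have "c (l * t + s) =
        TR (a * l ^ (q + 1) * t ^ (q + 1) + (2 * a * l * s ^ q + b * l) * t) + (TR (a * s ^ (q + 1)) + TR (b * s) + h)"
    for t
  proof -
    have "c (l * t + s) = TR (a * (l * t + s) ^ (q + 1)) + TR (b * l * t) + TR (b * s) + h"
      by (simp add: c tr_add distrib_left mult.assoc)
    moreover have "TR (a * l ^ (q + 1) * t ^ (q + 1) + (2 * a * l * s ^ q + b * l) * t) =
                   TR (a * l ^ (q + 1) * t ^ (q + 1)) + TR (2 * a * l * s ^ q * t) + TR (b * l * t)"
      by (simp add: tr_add distrib_right)
    ultimately show ?thesis
      unfolding tr_norm_affine[OF a] by (simp only: add_ac)
  qed
  moreover have "a * l ^ (q + 1) \<in> subfield_m m"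
    using a norm_in_subfield by (rule subfield_m_mult)
  moreover have "TR (a * s ^ (q + 1)) + TR (b * s) + h \<in> F3"
    using \<open>h \<in> F3\<close> by (intro F3_add tr_in_F3)
  ultimately show ?thesis
    using code_C_memI[of "a * l ^ (q + 1)" "TR (a * s ^ (q + 1)) + TR (b * s) + h" "2 * a * l * s ^ q + b * l"]
    by simp
qed

definition min_weight_word :: "('a \<Rightarrow> 'a) \<Rightarrow> bool" where
  "min_weight_word c \<longleftrightarrow> c \<in> Cm \<and> hweight c = code_d Cm"

lemma min_weight_word_affine: "min_weight_word c \<Longrightarrow> l \<noteq> 0 \<Longrightarrow> min_weight_word (\<lambda>t. c (l * t + s))"
  by (simp add: min_weight_word_def code_C_affine hweight_comp_bij[OF bij_affine])

lemma code_d_le_hweight: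
  assumes "c \<in> Cm" and "c \<noteq> (\<lambda>_. 0)"
  shows "code_d Cm \<le> hweight c"
  unfolding code_d_def using assms by (intro Min_le) auto

lemma exists_min_weight_word: "\<exists>c. min_weight_word c \<and> c \<noteq> (\<lambda>_. 0)"
proof -
  let ?W = "{hweight c | c. c \<in> Cm \<and> c \<noteq> (\<lambda>_. 0)}"
  have "(\<lambda>t. TR (0 * t ^ (q + 1) + 0 * t) + 1) \<in> Cm"
    by (intro code_C_memI) (simp_all add: subfield_m_def F3_1 zero_power)
  then have "(\<lambda>_. 1) \<in> Cm"
    by (simp add: tr_0)
  moreover have "(\<lambda>_. 1) \<noteq> (\<lambda>_ :: 'a. 0 :: 'a)"
    by (simp add: fun_eq_iff)
  ultimately have "?W \<noteq> {}"
    by blast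
  then have "code_d Cm \<in> ?W"
    unfolding code_d_def by (intro Min_in) simp_all
  then show ?thesis
    unfolding min_weight_word_def by auto
qed

abbreviation code_D :: "('a \<Rightarrow> 'a) set" where
  "code_D \<equiv> code_of_design (blocks_D m)"

lemma min_weight_word_square_in_code_D:
  assumes "min_weight_word c"
  shows "(\<lambda>t. (c t)\<^sup>2) \<in> code_D"
proof -
  have "{t. c t \<noteq> 0} \<in> blocks_D m"
    using assms unfolding blocks_D_def min_weight_word_def by blast
  then have "(\<lambda>t. if c t \<noteq> 0 then 1 else 0) \<in> code_D"
    using code_of_design_indicator by fastforce
  moreover have "(c t)\<^sup>2 = (if c t \<noteq> 0 then 1 else 0)" for t
    using assms code_C_in_F3 by (simp add: min_weight_word_def F3_square)
  ultimately show ?thesis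
    by simp
qed

section \<open>Squares of traces in the code of the design\<close>

context
  fixes a e :: 'a
  assumes a: "a \<in> subfield_m m" "a \<noteq> 0" and e: "e \<in> F3" "e \<noteq> 0"
    and min_weight: "min_weight_word (\<lambda>t. hform a t + e)"
begin

lemma hform_shift_plus_square_in_code_D: "(\<lambda>t. (hform a (t + s) + e)\<^sup>2) \<in> code_D"
  using min_weight_word_square_in_code_D[OF min_weight_word_affine[OF min_weight, of 1 s]] by simp

lemma hform_shift_minus_square_in_code_D: "(\<lambda>t. (hform a (t + s) - e)\<^sup>2) \<in> code_D"
proof -
  have "(-1 :: 'a) \<in> subfield_m m"
    using F3_subset_subfield_m F3_minus_1 by blast
  then obtain l where l: "l ^ (q + 1) = (-1 :: 'a)"
    using norm_surj by fastforce
  then have "l \<noteq> 0"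
    by (auto simp: zero_power)
  have "hform a (l * u) = - hform a u" for u
  proof -
    have "a * (l * u) ^ (q + 1) = - (a * u ^ (q + 1))"
      by (simp only: power_mult_distrib l) simp
    then show ?thesis
      by (simp add: hform_def tr_minus)
  qed
  then have "hform a (l * t + l * s) = - hform a (t + s)" for t
    by (simp flip: distrib_left)
  then show ?thesis
    using min_weight_word_square_in_code_D[OF min_weight_word_affine[OF min_weight \<open>l \<noteq> 0\<close>, of "l * s"]]
    by (simp add: power2_eq_square algebra_simps)
qed

lemma hform_shift_in_code_D: "(\<lambda>t. hform a (t + s)) \<in> code_D"
  using hform_shift_plus_square_in_code_D hform_shift_minus_square_in_code_D e
  by (rule code_of_design_of_shifted_squares)

lemma one_in_code_D: "(\<lambda>_. 1) \<in> code_D"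
proof -
  have "card {t. hform a t = 0} < card (UNIV :: 'a set)"
    using card_hform_eq_0[OF a] by (simp add: card_UNIV_eq_q_q)
  then obtain s where s: "hform a s \<noteq> 0"
    by (metis (mono_tags, lifting) UNIV_I mem_Collect_eq nat_less_le subsetI subset_antisym)
  define \<kappa> where "\<kappa> = hform a s"
  have "\<kappa> \<in> F3"
    by (simp add: \<kappa>_def hform_in_F3)
  have "(\<lambda>t. - \<kappa> * (hform a (t + s) + hform a (t + - s) + hform a (t + 0))) \<in> code_D"
    using \<open>\<kappa> \<in> F3\<close> by (intro code_of_design_smult code_of_design_add hform_shift_in_code_D F3_minus)
  moreover have "- \<kappa> * (hform a (t + s) + hform a (t + - s) + hform a (t + 0)) = 1" for t
  proof -
    \<comment> \<open>the linear terms cancel and \<open>3 = 0\<close>, leaving \<open>-\<kappa> \<cdot> 2\<kappa> = \<kappa>\<^sup>2 = 1\<close>\<close>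
    have "- \<kappa> * (hform a (t + s) + hform a (t + - s) + hform a (t + 0)) = - \<kappa> * (3 * hform a t + 2 * \<kappa>)"
      using hform_add[OF a(1), of t s] hform_diff[OF a(1), of t s] by (simp add: \<kappa>_def)
    also have "\<dots> = \<kappa>\<^sup>2"
      by (simp add: three_eq_0 two_eq_minus_one power2_eq_square)
    finally show ?thesis
      using \<open>\<kappa> \<in> F3\<close> s by (simp add: \<kappa>_def F3_square)
  qed
  ultimately show ?thesis
    by simp
qed

lemma hform_shift_square_in_code_D: "(\<lambda>t. (hform a (t + s))\<^sup>2) \<in> code_D"
  using hform_shift_plus_square_in_code_D hform_shift_in_code_D one_in_code_D e(1)
  by (rule code_of_design_square_of_shifted_square)

lemma tr_square_in_code_D_of_hform: "(\<lambda>t. (TR (c * t))\<^sup>2) \<in> code_D"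
proof -
  define s where "s = (c / (2 * a)) ^ q"
  have c: "2 * a * s ^ q = c"
    using a(2) two_neq_0 by (simp add: s_def power_q_q)
  define \<kappa> where "\<kappa> = hform a s"
  have "\<kappa> \<in> F3"
    by (simp add: \<kappa>_def hform_in_F3)
  have "(\<lambda>_. \<kappa>\<^sup>2) \<in> code_D"
    using one_in_code_D F3_mult[OF \<open>\<kappa> \<in> F3\<close> \<open>\<kappa> \<in> F3\<close>] by (simp add: code_of_design_const power2_eq_square)
  with \<open>\<kappa> \<in> F3\<close> have "(\<lambda>t. \<kappa> * hform a (t + 0) - \<kappa>\<^sup>2 - (hform a (t + s))\<^sup>2 - (hform a (t + - s))\<^sup>2
        - (hform a (t + 0))\<^sup>2) \<in> code_D"
    by (intro code_of_design_diff code_of_design_smult hform_shift_square_in_code_D hform_shift_in_code_D)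
  moreover have "\<kappa> * hform a (t + 0) - \<kappa>\<^sup>2 - (hform a (t + s))\<^sup>2 - (hform a (t + - s))\<^sup>2 - (hform a (t + 0))\<^sup>2
                 = (TR (c * t))\<^sup>2" for t
  proof -
    have "hform a (t + s) = hform a t + TR (c * t) + \<kappa>" and "hform a (t + - s) = hform a t - TR (c * t) + \<kappa>"
      using hform_add[OF a(1), of t s] hform_diff[OF a(1), of t s] c by (simp_all add: \<kappa>_def)
    moreover have "K * X - K\<^sup>2 - (X + L + K)\<^sup>2 - (X - L + K)\<^sup>2 - X\<^sup>2 = L\<^sup>2 - 3 * (X\<^sup>2 + X * K + K\<^sup>2 + L\<^sup>2)"
      for X L K :: 'a
      by algebra
    ultimately show ?thesis
      by (simp add: three_eq_0)
  qed
  ultimately show ?thesis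
    by simp
qed

end

lemma min_weight_word_hform_shift_neq_0:
  assumes "min_weight_word (\<lambda>t. hform a t + e)" and "a \<in> subfield_m m" and "a \<noteq> 0"
  shows "e \<noteq> 0"
proof
  assume "e = 0"
  obtain e' where e': "e' = 1 \<or> e' = -1" "card {t. hform a t = 0} < card {t. hform a t = e'}"
    using hform_level_gt_zero_level[OF assms(2,3)] by blast
  \<comment> \<open>the word \<open>hform a - e'\<close> vanishes more often than the minimum weight word \<open>hform a\<close>\<close>
  let ?g = "\<lambda>t. TR (a * t ^ (q + 1) + 0 * t) + - e'"
  have "?g \<in> Cm"
    using assms(2) e' by (intro code_C_memI F3_minus) (auto simp: F3_1 F3_minus_1)
  moreover have "?g \<noteq> (\<lambda>_. 0)"
    using e' by (auto dest!: fun_cong[of _ _ 0] simp: tr_0 zero_power)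
  ultimately have "code_d Cm \<le> hweight ?g"
    by (rule code_d_le_hweight)
  also have "hweight ?g = card (UNIV :: 'a set) - card {t. hform a t = e'}"
    by (simp add: hweight_eq_card_diff_zeros hform_def)
  also have "\<dots> < card (UNIV :: 'a set) - card {t. hform a t = 0}"
    using e'(2) card_mono[OF finite_UNIV subset_UNIV, of "{t. hform a t = e'}"]
    by (intro diff_less_mono2) linarith+
  also have "\<dots> = code_d Cm"
    using assms(1) \<open>e = 0\<close> by (simp add: min_weight_word_def hweight_eq_card_diff_zeros)
  finally show False
    by simp
qed

lemma min_weight_word_hform_shift:
  assumes w: "min_weight_word (\<lambda>t. TR (a * t ^ (q + 1) + b * t) + h)"
    and a: "a \<in> subfield_m m" "a \<noteq> 0" and h: "h \<in> F3"
  obtains e where "e \<in> F3" and "e \<noteq> 0" and "min_weight_word (\<lambda>t. hform a t + e)"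
proof -
  define s where "s = (- b / (2 * a)) ^ q"
  have s: "2 * a * s ^ q = - b"
    using a(2) two_neq_0 by (simp add: s_def power_q_q)
  define e where "e = hform a s + TR (b * s) + h"
  have "e \<in> F3"
    using h by (simp add: e_def F3_add hform_in_F3 tr_in_F3)
  have "TR (a * (1 * t + s) ^ (q + 1) + b * (1 * t + s)) + h = hform a t + e" for t
    using hform_add[OF a(1), of t s] s
    by (simp add: e_def hform_def tr_add tr_minus distrib_left)
  with min_weight_word_affine[OF w, of 1 s] have min_weight: "min_weight_word (\<lambda>t. hform a t + e)"
    by simp
  moreover have "e \<noteq> 0"
    using min_weight a by (rule min_weight_word_hform_shift_neq_0)
  ultimately show ?thesis
    using \<open>e \<in> F3\<close> that by blast
qed

lemma min_weight_word_linear_coeff_neq_0: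
  assumes "min_weight_word (\<lambda>t. TR (b * t) + h)" and "(\<lambda>t. TR (b * t) + h) \<noteq> (\<lambda>_. 0)"
  shows "b \<noteq> 0"
proof
  assume "b = 0"
  \<comment> \<open>then the word is a nonzero constant, heavier than the word \<open>TR\<close>, which vanishes at \<open>0\<close>\<close>
  obtain x where x: "TR x = 1"
    using exists_tr_eq_1 ..
  have "(\<lambda>t. TR (0 * t ^ (q + 1) + 1 * t) + 0) \<in> Cm"
    by (intro code_C_memI) (simp_all add: subfield_m_def F3_0 zero_power)
  moreover have "(\<lambda>t. TR (0 * t ^ (q + 1) + 1 * t) + 0) \<noteq> (\<lambda>_. 0)"
    using x by (auto dest!: fun_cong[of _ _ x])
  ultimately have "code_d Cm \<le> hweight TR"
    by (auto dest: code_d_le_hweight)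
  also have "\<dots> < card (UNIV :: 'a set)"
  proof -
    have "0 \<notin> {t. TR t \<noteq> 0}"
      by (simp add: tr_0)
    then show ?thesis
      unfolding hweight_def by (intro psubset_card_mono) auto
  qed
  also have "\<dots> = code_d Cm"
    using assms \<open>b = 0\<close> by (auto simp: min_weight_word_def hweight_def tr_0 fun_eq_iff)
  finally show False
    by simp
qed

lemma tr_square_in_code_D_of_linear:
  assumes w: "min_weight_word (\<lambda>t. TR (b * t) + h)" and nonzero: "(\<lambda>t. TR (b * t) + h) \<noteq> (\<lambda>_. 0)"
    and h: "h \<in> F3"
  shows "(\<lambda>t. (TR (c * t))\<^sup>2) \<in> code_D"
proof (cases "c = 0")
  case True
  then show ?thesis
    using code_of_design_zero by (simp add: tr_0)
next
  case False
  have "b \<noteq> 0"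
    using w nonzero by (rule min_weight_word_linear_coeff_neq_0)
  obtain x where x: "TR x = 1"
    using exists_tr_eq_1 ..
  have "TR (b * (c / b * t + - h * x / b)) + h = TR (c * t)" for t
  proof -
    have "b * (c / b * t + - h * x / b) = c * t - h * x"
      using \<open>b \<noteq> 0\<close> by (simp add: field_simps)
    then show ?thesis
      using x h by (simp add: tr_diff tr_smult)
  qed
  with min_weight_word_square_in_code_D[OF min_weight_word_affine[OF w, of "c / b" "- h * x / b"]]
  show ?thesis
    using False \<open>b \<noteq> 0\<close> by simp
qed

lemma tr_square_in_code_D: "(\<lambda>t. (TR (c * t))\<^sup>2) \<in> code_D"
proof -
  obtain w where w: "min_weight_word w" and nonzero: "w \<noteq> (\<lambda>_. 0)"
    using exists_min_weight_word by blast
  then obtain a b h where w_eq: "w = (\<lambda>t. TR (a * t ^ (q + 1) + b * t) + h)"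
    and a: "a \<in> subfield_m m" and h: "h \<in> F3"
    by (auto simp: min_weight_word_def elim: code_C_memE)
  show ?thesis
  proof (cases "a = 0")
    case True
    then show ?thesis
      using w nonzero h by (intro tr_square_in_code_D_of_linear[of b h]) (simp_all add: w_eq)
  next
    case False
    from w have "min_weight_word (\<lambda>t. TR (a * t ^ (q + 1) + b * t) + h)"
      by (simp only: w_eq)
    then obtain e where "e \<in> F3" "e \<noteq> 0" "min_weight_word (\<lambda>t. hform a t + e)"
      using a False h by (rule min_weight_word_hform_shift)
    with a False show ?thesis
      by (intro tr_square_in_code_D_of_hform)
  qed
qed

lemma tr_product_in_code_D: "(\<lambda>t. TR (b * t) * TR (b' * t)) \<in> code_D"
proof -
  have "(\<lambda>t. (TR ((b + b') * t))\<^sup>2 - (TR ((b - b') * t))\<^sup>2) \<in> code_D"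
    by (intro code_of_design_diff tr_square_in_code_D)
  moreover have "(TR ((b + b') * t))\<^sup>2 - (TR ((b - b') * t))\<^sup>2 = TR (b * t) * TR (b' * t)" for t
  proof -
    have "TR ((b + b') * t) = TR (b * t) + TR (b' * t)" and "TR ((b - b') * t) = TR (b * t) - TR (b' * t)"
      by (simp_all add: distrib_right left_diff_distrib tr_add tr_diff)
    moreover have "(x + y)\<^sup>2 - (x - y)\<^sup>2 = 4 * (x * y)" for x y :: 'a
      by (simp add: power2_eq_square algebra_simps)
    ultimately show ?thesis
      by (simp add: four_eq_one)
  qed
  ultimately show ?thesis
    by simp
qed

end

theorem lemma3p7:
  fixes m :: nat and b b' :: "'a::{field,finite}"
  assumes "m \<ge> 2" and "card (UNIV :: 'a set) = 3 ^ (2 * m)"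
  shows "(\<lambda>t. tr (2*m) (b * t) * tr (2*m) (b' * t)) \<in> code_of_design (blocks_D m :: 'a set set)"
proof -
  interpret gf_3_2m m "TYPE('a)"
    using assms by unfold_locales simp_all
  show ?thesis
    by (rule tr_product_in_code_D)
qed

end
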